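(* Let $f(t)\in\mathbb{F}_2[t]$ be irreducible, $f(t)\neq t$, not self-reciprocal, and $R_f=\mathbb{F}_2[t,t^{-1},f(t)^{-1}]$. Let $\varphi$ be an automorphism of $(R_f,+)$ and $\Phi$ an automorphism of $U(R_f)$. (a) If $\Phi(u)\varphi(1)=\varphi(u)$ for all $u\in U(R_f)$, then $\Phi(u)=u$ for all $u\in U(R_f)$. (b) If $\Phi(u)\varphi(1)=\varphi(u^{-1})$ for all $u\in U(R_f)$, then $\Phi(u)=u^{-1}$ for all $u\in U(R_f)$.
   Context: A polynomial $f(t)$ of degree $m$ is self-reciprocal if $t^m f(1/t)=f(t)$. *)

theory Defs
  imports "HOL-Computational_Algebra.Polynomial" "HOL-Computational_Algebra.Fraction_Field"
          "HOL-Library.Z2"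
begin

text \<open>F_2 is the two-element field bit; F_2[t] is bit poly; elements of
  R_f = F_2[t, t^-1, f^-1] are viewed inside the fraction field of F_2[t].\<close>

definition self_reciprocal :: "bit poly \<Rightarrow> bool" where
  "self_reciprocal f \<longleftrightarrow> reflect_poly f = f"

definition Rf :: "bit poly \<Rightarrow> bit poly fract set" where
  "Rf f = {x. \<exists>p a b. x = Fract p (monom 1 a * f ^ b)}"

definition units_Rf :: "bit poly \<Rightarrow> bit poly fract set" where
  "units_Rf f = {u \<in> Rf f. \<exists>v \<in> Rf f. u * v = 1}"

definition additive_aut :: "bit poly \<Rightarrow> (bit poly fract \<Rightarrow> bit poly fract) \<Rightarrow> bool" where
  "additive_aut f \<phi> \<longleftrightarrow> bij_betw \<phi> (Rf f) (Rf f) \<and>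
     (\<forall>x \<in> Rf f. \<forall>y \<in> Rf f. \<phi> (x + y) = \<phi> x + \<phi> y)"

definition unit_group_aut :: "bit poly \<Rightarrow> (bit poly fract \<Rightarrow> bit poly fract) \<Rightarrow> bool" where
  "unit_group_aut f \<Phi> \<longleftrightarrow> bij_betw \<Phi> (units_Rf f) (units_Rf f) \<and>
     (\<forall>u \<in> units_Rf f. \<forall>v \<in> units_Rf f. \<Phi> (u * v) = \<Phi> u * \<Phi> v)"

end

theory Submission
  imports Defs "HOL-Computational_Algebra.Polynomial_Factorial"
begin

text \<open>
  The units of \<open>R\<^sub>f\<close> are exactly the Laurent monomials \<open>t\<^sup>a f\<^sup>b\<close> with
  \<open>a, b \<in> \<int>\<close>, so \<open>\<Phi>\<close> is determined by \<open>\<Phi>(t)\<close> and \<open>\<Phi>(f)\<close>.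
  In case (a), additivity of \<open>\<phi>\<close> applied to \<open>f = \<Sum>\<^sub>i\<^sub>\<in>\<^sub>S t\<^sup>i\<close> gives
  \<open>\<Phi>(f) = \<Sum>\<^sub>i\<^sub>\<in>\<^sub>S \<Phi>(t)\<^sup>i\<close>; here the support \<open>S\<close> of \<open>f\<close> contains \<open>0\<close>
  and \<open>d = deg f\<close>, and has odd size because \<open>f(1) = 1\<close>.
  Writing \<open>\<Phi>(t) = t\<^sup>a f\<^sup>b\<close> and \<open>\<Phi>(f) = t\<^sup>k f\<^sup>l\<close>, comparing the \<open>t\<close>-adic
  valuation, the \<open>f\<close>-adic valuation and the degree of both sides forces \<open>b = 0\<close>,
  \<open>k = d min(a, 0)\<close> and \<open>l = |a|\<close>. Surjectivity of \<open>\<Phi>\<close> then gives \<open>a = \<plusminus>1\<close>: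
  for \<open>a = 1\<close> the map \<open>\<Phi>\<close> is the identity, while \<open>a = -1\<close> would make \<open>f\<close>
  self-reciprocal. Case (b) is case (a) for \<open>u \<mapsto> \<Phi>(u\<^sup>-\<^sup>1)\<close>.
\<close>

section \<open>Polynomials over \<open>\<bbbF>\<^sub>2\<close>\<close>

lemma of_nat_bit_eq_1_iff: "(of_nat n :: bit) = 1 \<longleftrightarrow> odd n"
  by (simp only: Z2.bit_eq_iff even_of_nat) simp

lemma is_unit_bit_poly_iff: "is_unit (p :: bit poly) \<longleftrightarrow> p = 1"
proof
  assume "is_unit p"
  then obtain c where "p = [:c:]" and "c \<noteq> 0" by (auto simp: is_unit_poly_iff)
  then show "p = 1" by (simp add: one_pCons)
qed simp

lemma irreducible_bit_poly_dvd_imp_eq: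
  fixes f p :: "bit poly"
  assumes "irreducible f" and "p dvd f" and "\<not> is_unit p"
  shows "f = p"
proof -
  obtain q where "f = p * q" using \<open>p dvd f\<close> ..
  with assms have "is_unit q" by (auto dest: irreducibleD)
  with \<open>f = p * q\<close> show ?thesis by (simp add: is_unit_bit_poly_iff)
qed

lemma coeff_0_irreducible_bit_poly:
  fixes f :: "bit poly"
  assumes "irreducible f" and "f \<noteq> [:0, 1:]"
  shows "coeff f 0 = 1"
proof (rule ccontr)
  assume "coeff f 0 \<noteq> 1"
  then have "[:0, 1:] dvd f" using poly_eq_0_iff_dvd[of f 0] by (simp add: poly_0_coeff_0)
  then have "f = [:0, 1:]"
    by (rule irreducible_bit_poly_dvd_imp_eq[OF \<open>irreducible f\<close>]) (simp add: is_unit_poly_iff)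
  with assms(2) show False ..
qed

lemma irreducible_bit_poly_not_dvd_t:
  fixes f :: "bit poly"
  assumes "irreducible f" and "f \<noteq> [:0, 1:]"
  shows "\<not> f dvd [:0, 1:]"
  using irreducible_bit_poly_dvd_imp_eq[OF irreducible_linear_field_poly[of 1 0]] assms
  by (auto simp: irreducible_def)

lemma finite_coeff_nonzero: "finite {i. coeff p i \<noteq> 0}"
  by (rule finite_subset[of _ "{..degree p}"]) (auto intro: le_degree)

lemma bit_poly_eq_sum_monom: "p = (\<Sum>i | coeff p i \<noteq> 0. monom 1 i)" for p :: "bit poly"
proof -
  have supp: "{i. coeff p i \<noteq> 0} = {i \<in> {..degree p}. coeff p i \<noteq> 0}"
    by (auto intro: le_degree)
  have "p = (\<Sum>i\<le>degree p. monom (coeff p i) i)" by (simp add: poly_as_sum_of_monoms)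
  also have "\<dots> = (\<Sum>i\<le>degree p. if coeff p i \<noteq> 0 then monom 1 i else 0)"
    by (rule sum.cong) auto
  also have "\<dots> = (\<Sum>i\<in>{i \<in> {..degree p}. coeff p i \<noteq> 0}. monom 1 i)"
    by (simp only: sum.inter_filter[OF finite_atMost])
  finally show ?thesis unfolding supp .
qed

lemma poly_1_bit_poly: "poly p 1 = of_nat (card {i. coeff p i \<noteq> 0})" for p :: "bit poly"
proof -
  have "poly p 1 = (\<Sum>i | coeff p i \<noteq> 0. poly (monom 1 i) 1)"
    by (subst bit_poly_eq_sum_monom) (simp add: poly_sum)
  then show ?thesis by (simp add: poly_monom)
qed

lemma reflect_bit_poly_eq_sum_monom:
  "reflect_poly p = (\<Sum>i | coeff p i \<noteq> 0. monom 1 (degree p - i))" for p :: "bit poly"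
proof (rule poly_eqI)
  fix n
  have "(\<Sum>i | coeff p i \<noteq> 0. coeff (monom 1 (degree p - i)) n :: bit)
      = (\<Sum>i | coeff p i \<noteq> 0. if n \<le> degree p \<and> i = degree p - n then 1 else 0)"
  proof (rule sum.cong)
    fix i assume "i \<in> {i. coeff p i \<noteq> 0}"
    then have "i \<le> degree p" by (simp add: le_degree)
    then show "coeff (monom 1 (degree p - i)) n = (if n \<le> degree p \<and> i = degree p - n then 1 else 0)"
      by (auto simp: coeff_monom)
  qed simp
  also have "\<dots> = coeff (reflect_poly p) n"
    using finite_coeff_nonzero[of p] by (simp add: coeff_reflect_poly)
  finally show "coeff (reflect_poly p) n = coeff (\<Sum>i | coeff p i \<noteq> 0. monom 1 (degree p - i)) n"
    unfolding coeff_sum by (rule sym)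
qed

lemma poly_1_irreducible_not_self_reciprocal:
  fixes f :: "bit poly"
  assumes "irreducible f" and "\<not> self_reciprocal f"
  shows "poly f 1 = 1"
proof (rule ccontr)
  assume "poly f 1 \<noteq> 1"
  then have "[:1, 1:] dvd f" using poly_eq_0_iff_dvd[of f 1] by simp
  then have "f = [:1, 1:]"
    by (rule irreducible_bit_poly_dvd_imp_eq[OF \<open>irreducible f\<close>]) (simp add: is_unit_poly_iff)
  moreover have "self_reciprocal ([:1, 1:] :: bit poly)"
    by (simp add: self_reciprocal_def reflect_poly_def)
  ultimately show False using assms(2) by simp
qed

lemma support_irreducible_bit_poly:
  fixes f :: "bit poly"
  assumes "irreducible f" and "f \<noteq> [:0, 1:]" and "\<not> self_reciprocal f"
  defines "S \<equiv> {i. coeff f i \<noteq> 0}"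
  shows "finite S" and "S \<subseteq> {..degree f}" and "0 \<in> S" and "degree f \<in> S" and "odd (card S)"
proof -
  have "f \<noteq> 0" using assms(1) by auto
  show "finite S" unfolding S_def by (rule finite_coeff_nonzero)
  show "S \<subseteq> {..degree f}" unfolding S_def by (auto intro: le_degree)
  show "0 \<in> S" unfolding S_def using coeff_0_irreducible_bit_poly[OF assms(1,2)] by simp
  show "degree f \<in> S" unfolding S_def using leading_coeff_neq_0[OF \<open>f \<noteq> 0\<close>] by blast
  show "odd (card S)"
    using poly_1_irreducible_not_self_reciprocal[OF assms(1,3)]
    by (simp add: poly_1_bit_poly of_nat_bit_eq_1_iff S_def)
qed

section \<open>Valuations of sums of products \<open>t\<^sup>e f\<^sup>g\<close>\<close>

lemma order_0_eqI:
  fixes p :: "'a::idom poly"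
  assumes "coeff p m \<noteq> 0" and "\<forall>n<m. coeff p n = 0"
  shows "order 0 p = m"
proof -
  have "p \<noteq> 0" using assms(1) by auto
  have "monom 1 m dvd p" and "\<not> monom 1 (Suc m) dvd p"
    using assms by (auto simp: monom_1_dvd_iff')
  then show ?thesis by (simp add: monom_1_dvd_iff[OF \<open>p \<noteq> 0\<close>])
qed

lemma degree_eqI:
  assumes "coeff p m \<noteq> 0" and "\<forall>n>m. coeff p n = 0"
  shows "degree p = m"
  using assms by (meson antisym degree_le le_degree)

lemma order_0_monom_mult_power:
  fixes f :: "'a::idom poly"
  assumes "coeff f 0 \<noteq> 0"
  shows "order 0 (monom 1 e * f ^ g) = e"
  by (rule order_0_eqI) (use assms in \<open>simp_all add: coeff_monom_mult coeff_0_power\<close>)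

lemma degree_monom_mult_power:
  fixes f :: "'a::idom poly"
  assumes "f \<noteq> 0"
  shows "degree (monom 1 e * f ^ g) = e + g * degree f"
  using assms by (simp add: degree_mult_eq degree_monom_eq degree_power_eq)

lemma coeff_sum_monom_mult_power_low:
  fixes f :: "'a::comm_semiring_1 poly"
  assumes "finite I" and "coeff f 0 = 1" and "\<forall>i\<in>I. m \<le> e i"
  shows "coeff (\<Sum>i\<in>I. monom 1 (e i) * f ^ g i) m = of_nat (card {i\<in>I. e i = m})"
proof -
  have "coeff (monom 1 (e i) * f ^ g i) m = of_bool (e i = m)" if "i \<in> I" for i
    using assms(2,3) that by (auto simp: coeff_monom_mult coeff_0_power)
  then have "coeff (\<Sum>i\<in>I. monom 1 (e i) * f ^ g i) m = (\<Sum>i\<in>I. of_bool (e i = m))"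
    unfolding coeff_sum by (rule sum.cong[OF refl])
  also have "\<dots> = of_nat (card {i\<in>I. e i = m})" using assms(1) by (simp add: Int_def)
  finally show ?thesis .
qed

lemma coeff_sum_monom_mult_power_top:
  fixes f :: "'a::idom poly"
  assumes "finite I" and "lead_coeff f = 1" and "\<forall>i\<in>I. e i + g i * degree f \<le> m"
  shows "coeff (\<Sum>i\<in>I. monom 1 (e i) * f ^ g i) m
    = of_nat (card {i\<in>I. e i + g i * degree f = m})"
proof -
  have "f \<noteq> 0" using assms(2) by auto
  have "coeff (monom 1 (e i) * f ^ g i) m = of_bool (e i + g i * degree f = m)" if "i \<in> I" for i
  proof (cases "e i + g i * degree f = m")
    case True
    then have "coeff (monom 1 (e i) * f ^ g i) m = lead_coeff (monom 1 (e i) * f ^ g i)"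
      by (simp add: degree_monom_mult_power[OF \<open>f \<noteq> 0\<close>])
    also have "\<dots> = 1"
      using assms(2) by (simp add: lead_coeff_mult lead_coeff_power degree_monom_eq)
    finally show ?thesis using True by simp
  next
    case False
    moreover have "e i + g i * degree f \<le> m" using assms(3) that by blast
    ultimately have "degree (monom 1 (e i) * f ^ g i) < m"
      by (simp add: degree_monom_mult_power[OF \<open>f \<noteq> 0\<close>])
    with False show ?thesis by (simp add: coeff_eq_0)
  qed
  then have "coeff (\<Sum>i\<in>I. monom 1 (e i) * f ^ g i) m
      = (\<Sum>i\<in>I. of_bool (e i + g i * degree f = m))"
    unfolding coeff_sum by (rule sum.cong[OF refl])
  also have "\<dots> = of_nat (card {i\<in>I. e i + g i * degree f = m})" using assms(1) by (simp add: Int_def)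
  finally show ?thesis .
qed

lemma order_0_sum_monom_mult_power:
  fixes f :: "bit poly"
  assumes "finite I" and "coeff f 0 = 1" and "\<forall>i\<in>I. m \<le> e i" and "odd (card {i\<in>I. e i = m})"
  shows "order 0 (\<Sum>i\<in>I. monom 1 (e i) * f ^ g i) = m"
proof (rule order_0_eqI)
  have "coeff (\<Sum>i\<in>I. monom 1 (e i) * f ^ g i) m = of_nat (card {i\<in>I. e i = m})"
    using assms(1-3) by (rule coeff_sum_monom_mult_power_low)
  also have "\<dots> = 1" by (simp only: of_nat_bit_eq_1_iff) (rule assms(4))
  finally show "coeff (\<Sum>i\<in>I. monom 1 (e i) * f ^ g i) m \<noteq> 0" by simp
  show "\<forall>n<m. coeff (\<Sum>i\<in>I. monom 1 (e i) * f ^ g i) n = 0"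
  proof (intro allI impI)
    fix n assume "n < m"
    have "coeff (monom 1 (e i) * f ^ g i) n = 0" if "i \<in> I" for i
    proof -
      have "m \<le> e i" using assms(3) that by blast
      with \<open>n < m\<close> show ?thesis by (simp add: coeff_monom_mult)
    qed
    then show "coeff (\<Sum>i\<in>I. monom 1 (e i) * f ^ g i) n = 0" by (simp add: coeff_sum)
  qed
qed

lemma degree_sum_monom_mult_power:
  fixes f :: "bit poly"
  assumes "finite I" and "f \<noteq> 0" and "\<forall>i\<in>I. e i + g i * degree f \<le> m"
    and "odd (card {i\<in>I. e i + g i * degree f = m})"
  shows "degree (\<Sum>i\<in>I. monom 1 (e i) * f ^ g i) = m"
proof (rule degree_eqI)
  have "lead_coeff f = 1" by (metis assms(2) bit_not_zero_iff leading_coeff_neq_0)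
  with assms(1) have "coeff (\<Sum>i\<in>I. monom 1 (e i) * f ^ g i) m
      = of_nat (card {i\<in>I. e i + g i * degree f = m})"
    using assms(3) by (rule coeff_sum_monom_mult_power_top)
  also have "\<dots> = 1" by (simp only: of_nat_bit_eq_1_iff) (rule assms(4))
  finally show "coeff (\<Sum>i\<in>I. monom 1 (e i) * f ^ g i) m \<noteq> 0" by simp
  show "\<forall>n>m. coeff (\<Sum>i\<in>I. monom 1 (e i) * f ^ g i) n = 0"
  proof (intro allI impI)
    fix n assume "m < n"
    have "coeff (monom 1 (e i) * f ^ g i) n = 0" if "i \<in> I" for i
    proof (rule coeff_eq_0)
      have "e i + g i * degree f \<le> m" using assms(3) that by blast
      with \<open>m < n\<close> show "degree (monom 1 (e i) * f ^ g i) < n"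
        by (simp add: degree_monom_mult_power[OF assms(2)])
    qed
    then show "coeff (\<Sum>i\<in>I. monom 1 (e i) * f ^ g i) n = 0" by (simp add: coeff_sum)
  qed
qed

lemma power_dvd_monom_mult_power_iff:
  fixes f :: "'a::idom poly"
  assumes "prime_elem f" and "\<not> f dvd [:0, 1:]"
  shows "f ^ j dvd monom 1 e * f ^ g \<longleftrightarrow> j \<le> g"
proof
  assume "j \<le> g"
  then show "f ^ j dvd monom 1 e * f ^ g" by (simp add: le_imp_power_dvd)
next
  assume dvd: "f ^ j dvd monom 1 e * f ^ g"
  have "\<not> f dvd monom 1 e"
    using assms prime_elem_dvd_power[OF assms(1)] by (auto simp: monom_altdef)
  show "j \<le> g"
  proof (rule ccontr)
    assume "\<not> j \<le> g"
    then have "f ^ Suc g dvd f ^ j" by (intro le_imp_power_dvd) simp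
    with dvd have "f ^ g * f dvd f ^ g * monom 1 e" by (metis dvd_trans mult.commute power_Suc2)
    with assms(1) have "f dvd monom 1 e" by (simp add: prime_elem_def)
    with \<open>\<not> f dvd monom 1 e\<close> show False ..
  qed
qed

lemma power_dvd_sum_monom_mult_power_iff:
  fixes f :: "'a::idom poly"
  assumes "prime_elem f" and "\<not> f dvd [:0, 1:]" and "finite I" and "i0 \<in> I"
    and "\<forall>i\<in>I - {i0}. g i0 < g i"
  shows "f ^ j dvd (\<Sum>i\<in>I. monom 1 (e i) * f ^ g i) \<longleftrightarrow> j \<le> g i0"
proof
  assume "j \<le> g i0"
  have "f ^ j dvd monom 1 (e i) * f ^ g i" if "i \<in> I" for i
  proof -
    have "g i0 \<le> g i" using assms(5) that by (cases "i = i0") (simp_all add: less_imp_le)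
    with \<open>j \<le> g i0\<close> show ?thesis by (simp add: power_dvd_monom_mult_power_iff[OF assms(1,2)])
  qed
  then show "f ^ j dvd (\<Sum>i\<in>I. monom 1 (e i) * f ^ g i)" by (rule dvd_sum)
next
  assume dvd: "f ^ j dvd (\<Sum>i\<in>I. monom 1 (e i) * f ^ g i)"
  have "f ^ Suc (g i0) dvd monom 1 (e i) * f ^ g i" if "i \<in> I - {i0}" for i
  proof -
    from assms(5) that have "g i0 < g i" by blast
    then show ?thesis by (subst power_dvd_monom_mult_power_iff[OF assms(1,2)]) simp
  qed
  then have rest: "f ^ Suc (g i0) dvd (\<Sum>i\<in>I - {i0}. monom 1 (e i) * f ^ g i)"
    by (rule dvd_sum)
  have "(\<Sum>i\<in>I. monom 1 (e i) * f ^ g i)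
      = monom 1 (e i0) * f ^ g i0 + (\<Sum>i\<in>I - {i0}. monom 1 (e i) * f ^ g i)"
    using assms(3,4) by (rule sum.remove)
  then have "f ^ Suc (g i0) dvd (\<Sum>i\<in>I. monom 1 (e i) * f ^ g i)
      \<longleftrightarrow> f ^ Suc (g i0) dvd monom 1 (e i0) * f ^ g i0"
    using dvd_add_left_iff[OF rest] by simp
  also have "\<dots> \<longleftrightarrow> False"
    by (subst power_dvd_monom_mult_power_iff[OF assms(1,2)]) simp
  finally show "j \<le> g i0"
    using dvd dvd_trans le_imp_power_dvd[of "Suc (g i0)" j] by (cases "j \<le> g i0") auto
qed

section \<open>Laurent monomials \<open>t\<^sup>a f\<^sup>b\<close>\<close>

lemma to_fract_power: "to_fract (p ^ n) = to_fract p ^ n"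
  by (induction n) simp_all

definition tf_monom :: "'a::idom poly \<Rightarrow> int \<Rightarrow> int \<Rightarrow> 'a poly fract" where
  "tf_monom f a b = to_fract [:0, 1:] powi a * to_fract f powi b"

lemma tf_monom_0_0 [simp]: "tf_monom f 0 0 = 1"
  by (simp add: tf_monom_def)

lemma tf_monom_1_0: "tf_monom f 1 0 = to_fract [:0, 1:]"
  by (simp add: tf_monom_def)

lemma tf_monom_0_1: "tf_monom f 0 1 = to_fract f"
  by (simp add: tf_monom_def)

lemma tf_monom_nonzero: "f \<noteq> 0 \<Longrightarrow> tf_monom f a b \<noteq> 0"
  by (simp add: tf_monom_def power_int_not_zero)

lemma tf_monom_mult:
  "f \<noteq> 0 \<Longrightarrow> tf_monom f a b * tf_monom f c e = tf_monom f (a + c) (b + e)"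
  by (simp add: tf_monom_def power_int_add algebra_simps)

lemma inverse_tf_monom: "inverse (tf_monom f a b) = tf_monom f (- a) (- b)"
  by (simp add: tf_monom_def power_int_minus mult.commute)

lemma tf_monom_powi: "tf_monom f a b powi n = tf_monom f (n * a) (n * b)"
  by (simp add: tf_monom_def power_int_mult_distrib power_int_mult mult.commute)

lemma tf_monom_power: "tf_monom f a b ^ n = tf_monom f (int n * a) (int n * b)"
  using tf_monom_powi[of f a b "int n"] by simp

lemma tf_monom_of_nat: "tf_monom f (int a) (int b) = to_fract (monom 1 a * f ^ b)"
  by (simp add: tf_monom_def to_fract_power monom_altdef)

lemma sum_tf_monom_eq_shifted:
  fixes f :: "'a::idom poly"
  assumes "f \<noteq> 0" and "finite I" and "(\<Sum>i\<in>I. tf_monom f (x i) (y i)) = tf_monom f k l"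
  obtains N M :: int
  where "\<forall>i\<in>I. 0 \<le> x i + N \<and> 0 \<le> y i + M" and "0 \<le> k + N" and "0 \<le> l + M"
    and "(\<Sum>i\<in>I. monom 1 (nat (x i + N)) * f ^ nat (y i + M))
      = monom 1 (nat (k + N)) * f ^ nat (l + M)"
proof
  define N where "N = \<bar>k\<bar> + (\<Sum>i\<in>I. \<bar>x i\<bar>)"
  define M where "M = \<bar>l\<bar> + (\<Sum>i\<in>I. \<bar>y i\<bar>)"
  have "\<bar>x i\<bar> \<le> (\<Sum>i\<in>I. \<bar>x i\<bar>)" and "\<bar>y i\<bar> \<le> (\<Sum>i\<in>I. \<bar>y i\<bar>)" if "i \<in> I" for i
    using assms(2) that by (auto intro!: member_le_sum)
  moreover have sx: "0 \<le> (\<Sum>i\<in>I. \<bar>x i\<bar>)" and sy: "0 \<le> (\<Sum>i\<in>I. \<bar>y i\<bar>)"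
    by (simp_all add: sum_nonneg)
  ultimately show nonneg: "\<forall>i\<in>I. 0 \<le> x i + N \<and> 0 \<le> y i + M"
    unfolding N_def M_def by fastforce
  show "0 \<le> k + N" unfolding N_def using sx by linarith
  show "0 \<le> l + M" unfolding M_def using sy by linarith
  have "(\<Sum>i\<in>I. tf_monom f (x i + N) (y i + M)) = tf_monom f (k + N) (l + M)"
    using arg_cong[OF assms(3), of "\<lambda>z. z * tf_monom f N M"]
    by (simp add: sum_distrib_right tf_monom_mult[OF assms(1)])
  moreover have "tf_monom f (x i + N) (y i + M) = to_fract (monom 1 (nat (x i + N)) * f ^ nat (y i + M))"
    if "i \<in> I" for i
    using nonneg that tf_monom_of_nat[of f "nat (x i + N)" "nat (y i + M)"] by simp
  moreover have "tf_monom f (k + N) (l + M) = to_fract (monom 1 (nat (k + N)) * f ^ nat (l + M))"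
    using \<open>0 \<le> k + N\<close> \<open>0 \<le> l + M\<close> tf_monom_of_nat[of f "nat (k + N)" "nat (l + M)"] by simp
  ultimately have "to_fract (\<Sum>i\<in>I. monom 1 (nat (x i + N)) * f ^ nat (y i + M))
      = to_fract (monom 1 (nat (k + N)) * f ^ nat (l + M))"
    by (simp del: to_fract_mult)
  then show "(\<Sum>i\<in>I. monom 1 (nat (x i + N)) * f ^ nat (y i + M))
      = monom 1 (nat (k + N)) * f ^ nat (l + M)"
    by (simp only: to_fract_eq_iff)
qed

lemma sum_tf_monom_eq_t_exponent:
  fixes f :: "bit poly"
  assumes "coeff f 0 = 1" and "finite I" and "(\<Sum>i\<in>I. tf_monom f (x i) (y i)) = tf_monom f k l"
    and "\<forall>i\<in>I. m \<le> x i" and "odd (card {i\<in>I. x i = m})"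
  shows "k = m"
proof -
  have "f \<noteq> 0" using assms(1) by auto
  obtain N M where nonneg: "\<forall>i\<in>I. 0 \<le> x i + N \<and> 0 \<le> y i + M" and "0 \<le> k + N" "0 \<le> l + M"
    and eq: "(\<Sum>i\<in>I. monom 1 (nat (x i + N)) * f ^ nat (y i + M))
      = monom 1 (nat (k + N)) * f ^ nat (l + M)"
    using sum_tf_monom_eq_shifted[OF \<open>f \<noteq> 0\<close> assms(2,3)] by blast
  from assms(5) have "{i\<in>I. x i = m} \<noteq> {}" by (metis card.empty even_zero)
  then obtain i where "i \<in> I" and "x i = m" by blast
  with nonneg have "0 \<le> m + N" by auto
  with nonneg have "{i\<in>I. nat (x i + N) = nat (m + N)} = {i\<in>I. x i = m}" by auto
  with assms nonneg have "order 0 (\<Sum>i\<in>I. monom 1 (nat (x i + N)) * f ^ nat (y i + M)) = nat (m + N)"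
    by (intro order_0_sum_monom_mult_power) (auto intro: nat_mono)
  then have "nat (k + N) = nat (m + N)"
    using assms(1) by (simp add: eq order_0_monom_mult_power)
  with \<open>0 \<le> k + N\<close> \<open>0 \<le> m + N\<close> show "k = m" by simp
qed

lemma sum_tf_monom_eq_degree:
  fixes f :: "bit poly"
  assumes "f \<noteq> 0" and "finite I" and "(\<Sum>i\<in>I. tf_monom f (x i) (y i)) = tf_monom f k l"
    and "\<forall>i\<in>I. x i + y i * degree f \<le> m" and "odd (card {i\<in>I. x i + y i * degree f = m})"
  shows "k + l * degree f = m"
proof -
  obtain N M where nonneg: "\<forall>i\<in>I. 0 \<le> x i + N \<and> 0 \<le> y i + M" and "0 \<le> k + N" "0 \<le> l + M"
    and eq: "(\<Sum>i\<in>I. monom 1 (nat (x i + N)) * f ^ nat (y i + M))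
      = monom 1 (nat (k + N)) * f ^ nat (l + M)"
    using sum_tf_monom_eq_shifted[OF assms(1-3)] by blast
  define shift where "shift j = nat (j + N + M * degree f)" for j
  have shift_nat: "nat (a + N) + nat (b + M) * degree f = shift (a + b * degree f)"
    if "0 \<le> a + N" and "0 \<le> b + M" for a b
  proof -
    have "int (nat (a + N) + nat (b + M) * degree f) = a + b * degree f + N + M * degree f"
      using that by (simp add: algebra_simps)
    then show ?thesis unfolding shift_def by (metis nat_int)
  qed
  from assms(5) have "{i\<in>I. x i + y i * degree f = m} \<noteq> {}" by (metis card.empty even_zero)
  then obtain i where "i \<in> I" and "x i + y i * degree f = m" by blast
  have shift_nonneg: "0 \<le> a + b * degree f + N + M * degree f"
    if "0 \<le> a + N" and "0 \<le> b + M" for a b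
  proof -
    have "0 \<le> a + N + (b + M) * degree f" using that by simp
    then show ?thesis by (simp add: algebra_simps)
  qed
  with nonneg \<open>i \<in> I\<close> \<open>x i + y i * degree f = m\<close> have "0 \<le> m + N + M * degree f" by blast
  have "degree (\<Sum>i\<in>I. monom 1 (nat (x i + N)) * f ^ nat (y i + M)) = shift m"
  proof (rule degree_sum_monom_mult_power[OF assms(2,1)])
    show "\<forall>i\<in>I. nat (x i + N) + nat (y i + M) * degree f \<le> shift m"
      using nonneg assms(4) by (auto simp: shift_nat shift_def)
    have "nat (x i + N) + nat (y i + M) * degree f = shift m \<longleftrightarrow> x i + y i * degree f = m"
      if "i \<in> I" for i
      using nonneg that shift_nonneg \<open>0 \<le> m + N + M * degree f\<close>
      by (simp add: shift_nat shift_def eq_nat_nat_iff)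
    then have "{i\<in>I. nat (x i + N) + nat (y i + M) * degree f = shift m}
        = {i\<in>I. x i + y i * degree f = m}"
      by blast
    with assms(5) show "odd (card {i\<in>I. nat (x i + N) + nat (y i + M) * degree f = shift m})"
      by simp
  qed
  then have "shift (k + l * degree f) = shift m"
    using assms(1) \<open>0 \<le> k + N\<close> \<open>0 \<le> l + M\<close>
    by (simp add: eq degree_monom_mult_power shift_nat)
  with shift_nonneg[OF \<open>0 \<le> k + N\<close> \<open>0 \<le> l + M\<close>] \<open>0 \<le> m + N + M * degree f\<close>
  show ?thesis by (simp add: shift_def)
qed

lemma sum_tf_monom_eq_f_exponent:
  fixes f :: "'a::idom poly"
  assumes "prime_elem f" and "\<not> f dvd [:0, 1:]" and "finite I"
    and "(\<Sum>i\<in>I. tf_monom f (x i) (y i)) = tf_monom f k l"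
    and "i0 \<in> I" and "\<forall>i\<in>I - {i0}. y i0 < y i"
  shows "l = y i0"
proof -
  have "f \<noteq> 0" using assms(1) by auto
  obtain N M where nonneg: "\<forall>i\<in>I. 0 \<le> x i + N \<and> 0 \<le> y i + M" and "0 \<le> l + M"
    and eq: "(\<Sum>i\<in>I. monom 1 (nat (x i + N)) * f ^ nat (y i + M))
      = monom 1 (nat (k + N)) * f ^ nat (l + M)"
    using sum_tf_monom_eq_shifted[OF \<open>f \<noteq> 0\<close> assms(3,4)] by blast
  have "nat (y i0 + M) < nat (y i + M)" if "i \<in> I - {i0}" for i
  proof -
    have "y i0 < y i" using assms(6) that by blast
    moreover have "0 \<le> y i0 + M" using nonneg assms(5) by blast
    ultimately show ?thesis by simp
  qed
  then have "\<forall>i\<in>I - {i0}. nat (y i0 + M) < nat (y i + M)" by blast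
  then have "f ^ j dvd monom 1 (nat (k + N)) * f ^ nat (l + M) \<longleftrightarrow> j \<le> nat (y i0 + M)" for j
    unfolding eq[symmetric] by (rule power_dvd_sum_monom_mult_power_iff[OF assms(1-3,5)])
  then have "nat (l + M) = nat (y i0 + M)"
    by (metis power_dvd_monom_mult_power_iff[OF assms(1,2)] le_antisym order_refl)
  moreover have "0 \<le> y i0 + M" using nonneg assms(5) by blast
  ultimately show ?thesis using \<open>0 \<le> l + M\<close> by simp
qed

lemma tf_monom_inject:
  fixes f :: "bit poly"
  assumes "coeff f 0 = 1" and "prime_elem f" and "\<not> f dvd [:0, 1:]"
  shows "tf_monom f a b = tf_monom f c e \<longleftrightarrow> a = c \<and> b = e"
proof
  assume eq: "tf_monom f a b = tf_monom f c e"
  then have "(\<Sum>i\<in>{()}. tf_monom f a b) = tf_monom f c e" by simp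
  then show "a = c \<and> b = e"
    using sum_tf_monom_eq_t_exponent[OF assms(1), of "{()}" "\<lambda>_. a" "\<lambda>_. b" c e a]
      sum_tf_monom_eq_f_exponent[OF assms(2,3), of "{()}" "\<lambda>_. a" "\<lambda>_. b" c e "()"]
    by simp
qed simp

section \<open>The unit group of \<open>R\<^sub>f\<close>\<close>

lemma Fract_monom_mult_power:
  fixes f :: "'a::idom poly"
  assumes "f \<noteq> 0"
  shows "Fract p (monom 1 a * f ^ b) = to_fract p * tf_monom f (- int a) (- int b)"
  by (simp add: Fract_conv_to_fract divide_inverse tf_monom_of_nat[symmetric] inverse_tf_monom
      del: to_fract_mult)

lemma to_fract_in_Rf: "to_fract p \<in> Rf f"
proof -
  have "to_fract p = Fract p (monom 1 0 * f ^ 0)" by (simp add: to_fract_def monom_0 one_pCons)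
  then show ?thesis unfolding Rf_def by blast
qed

lemma tf_monom_in_Rf:
  assumes "f \<noteq> 0"
  shows "tf_monom f a b \<in> Rf f"
proof -
  have "Fract (monom 1 (nat a) * f ^ nat b) (monom 1 (nat (- a)) * f ^ nat (- b))
      = tf_monom f (int (nat a)) (int (nat b)) * tf_monom f (- int (nat (- a))) (- int (nat (- b)))"
    by (simp only: Fract_monom_mult_power[OF assms] tf_monom_of_nat)
  also have "\<dots> = tf_monom f a b" by (simp add: tf_monom_mult[OF assms])
  finally show ?thesis unfolding Rf_def by (blast intro: sym)
qed

lemma tf_monom_in_units_Rf:
  assumes "f \<noteq> 0"
  shows "tf_monom f a b \<in> units_Rf f"
proof -
  have "tf_monom f a b * tf_monom f (- a) (- b) = 1" by (simp add: tf_monom_mult[OF assms])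
  then show ?thesis unfolding units_Rf_def using tf_monom_in_Rf[OF assms] by blast
qed

lemma dvd_prime_power_mult:
  fixes p :: "'a::idom"
  assumes "prime_elem p" and "x dvd p ^ n * y"
  shows "\<exists>i z. x = p ^ i * z \<and> z dvd y"
  using assms(2)
proof (induction n arbitrary: x)
  case 0
  then show ?case by (metis mult_1 power_0)
next
  case (Suc n)
  show ?case
  proof (cases "p dvd x")
    case True
    then obtain x' where x': "x = p * x'" ..
    with Suc.prems have "p * x' dvd p * (p ^ n * y)" by (simp add: mult.assoc)
    with assms(1) have "x' dvd p ^ n * y" by (simp add: prime_elem_def)
    with Suc.IH obtain i z where "x' = p ^ i * z" and "z dvd y" by blast
    with x' show ?thesis by (metis mult.assoc power_Suc)
  next
    case False
    from Suc.prems obtain k where k: "p * (p ^ n * y) = x * k" by (auto simp: mult.assoc elim: dvdE)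
    then have "p dvd x * k" by (metis dvd_triv_left)
    with assms(1) False have "p dvd k" by (simp add: prime_elem_dvd_mult_iff)
    then obtain k' where "k = p * k'" ..
    with k assms(1) have "p ^ n * y = x * k'" by (auto simp: prime_elem_def ac_simps)
    then have "x dvd p ^ n * y" by simp
    then show ?thesis by (rule Suc.IH)
  qed
qed

lemma dvd_monom_mult_power:
  fixes f :: "bit poly"
  assumes "prime_elem f" and "x dvd monom 1 n * f ^ m"
  shows "\<exists>i j. x = monom 1 i * f ^ j"
proof -
  have "x dvd [:0, 1:] ^ n * f ^ m" using assms(2) by (simp add: monom_altdef)
  then obtain i z where "x = [:0, 1:] ^ i * z" and "z dvd f ^ m"
    using dvd_prime_power_mult[OF prime_elem_linear_field_poly[of 1 0]] by blast
  moreover obtain j w where "z = f ^ j * w" and "w dvd 1"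
    using dvd_prime_power_mult[OF assms(1), of z m 1] \<open>z dvd f ^ m\<close> by auto
  ultimately show ?thesis by (auto simp: is_unit_bit_poly_iff monom_altdef)
qed

lemma units_Rf_iff:
  fixes f :: "bit poly"
  assumes "prime_elem f"
  shows "u \<in> units_Rf f \<longleftrightarrow> (\<exists>a b. u = tf_monom f a b)"
proof
  have "f \<noteq> 0" using assms by auto
  assume "u \<in> units_Rf f"
  then obtain p q a b c e where u: "u = Fract p (monom 1 a * f ^ b)"
    and "Fract p (monom 1 a * f ^ b) * Fract q (monom 1 c * f ^ e) = 1"
    unfolding units_Rf_def Rf_def by blast
  moreover have "Fract p (monom 1 a * f ^ b) * Fract q (monom 1 c * f ^ e)
      = tf_monom f (- (int a + int c)) (- (int b + int e)) * to_fract (p * q)"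
    by (simp add: Fract_monom_mult_power[OF \<open>f \<noteq> 0\<close>] ac_simps tf_monom_mult[OF \<open>f \<noteq> 0\<close>])
  ultimately have "inverse (tf_monom f (- (int a + int c)) (- (int b + int e))) = to_fract (p * q)"
    by (intro inverse_unique) simp
  then have "to_fract (p * q) = tf_monom f (int a + int c) (int b + int e)"
    by (simp add: inverse_tf_monom add.commute)
  also have "\<dots> = to_fract (monom 1 (a + c) * f ^ (b + e))"
    using tf_monom_of_nat[of f "a + c" "b + e"] by (simp del: to_fract_mult)
  finally have "p * q = monom 1 (a + c) * f ^ (b + e)" by (simp only: to_fract_eq_iff)
  then have "p dvd monom 1 (a + c) * f ^ (b + e)" by (metis dvd_triv_left)
  then obtain i j where "p = monom 1 i * f ^ j" using dvd_monom_mult_power[OF assms] by blast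
  with u have "u = tf_monom f (int i - int a) (int j - int b)"
    by (simp add: Fract_monom_mult_power[OF \<open>f \<noteq> 0\<close>] tf_monom_of_nat[symmetric] tf_monom_mult[OF \<open>f \<noteq> 0\<close>]
        del: to_fract_mult)
  then show "\<exists>a b. u = tf_monom f a b" by blast
next
  assume "\<exists>a b. u = tf_monom f a b"
  with assms show "u \<in> units_Rf f" by (auto intro: tf_monom_in_units_Rf)
qed

lemma linear_min_on_interval:
  fixes S :: "nat set" and c :: int
  assumes "S \<subseteq> {..d}" and "0 \<in> S" and "d \<in> S"
  shows "\<forall>i\<in>S. int d * min c 0 \<le> c * int i"
    and "{i\<in>S. c * int i = int d * min c 0} = (if c = 0 then S else if 0 < c then {0} else {d})"
proof -
  have le: "int i \<le> int d" if "i \<in> S" for i using assms(1) that by auto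
  show "\<forall>i\<in>S. int d * min c 0 \<le> c * int i"
  proof
    fix i assume "i \<in> S"
    show "int d * min c 0 \<le> c * int i"
    proof (cases "c < 0")
      case True
      with le[OF \<open>i \<in> S\<close>] show ?thesis by (simp add: min_def mult.commute mult_left_mono_neg)
    qed (simp add: min_def)
  qed
  show "{i\<in>S. c * int i = int d * min c 0} = (if c = 0 then S else if 0 < c then {0} else {d})"
    using assms(2,3) le by (auto simp: min_def)
qed

lemma exponent_constraints_imp_abs:
  fixes a b l :: int and d :: nat
  assumes "0 < d" and "b \<noteq> 0 \<Longrightarrow> l = int d * min b 0"
    and "int d * min a 0 + l * int d = int d * max (a + b * int d) 0"
  shows "b = 0 \<and> l = \<bar>a\<bar>"
proof (cases "b = 0")
  case True
  with assms(3) have "int d * (min a 0 + l) = int d * max a 0" by (simp add: algebra_simps)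
  with assms(1) True show ?thesis by auto
next
  case False
  with assms(2,3) have "int d * (min a 0 + min b 0 * int d) = int d * max (a + b * int d) 0"
    by (simp add: algebra_simps)
  with assms(1) have eqn: "min a 0 + min b 0 * int d = max (a + b * int d) 0" by simp
  show ?thesis
  proof (cases "0 < b")
    case True
    with assms(1) have "0 < b * int d" by simp
    with eqn True show ?thesis by (auto simp: min_def max_def split: if_splits)
  next
    case False
    with \<open>b \<noteq> 0\<close> assms(1) have "b * int d < 0" by (simp add: mult_neg_pos)
    with eqn False show ?thesis by (auto simp: min_def max_def split: if_splits)
  qed
qed

lemma sum_power_tf_monom_eq_tf_monom:
  fixes f :: "bit poly" and S :: "nat set"
  assumes "coeff f 0 = 1" and "prime_elem f" and "\<not> f dvd [:0, 1:]" and "0 < degree f"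
    and "finite S" and "S \<subseteq> {..degree f}" and "0 \<in> S" and "degree f \<in> S" and "odd (card S)"
    and "(\<Sum>i\<in>S. tf_monom f a b ^ i) = tf_monom f k l"
  shows "b = 0 \<and> k = int (degree f) * min a 0 \<and> l = \<bar>a\<bar>"
proof -
  define d where "d = degree f"
  have "f \<noteq> 0" using assms(1) by auto
  have eq: "(\<Sum>i\<in>S. tf_monom f (a * int i) (b * int i)) = tf_monom f k l"
    using assms(10) by (simp add: tf_monom_power mult.commute)
  note min_on_S = linear_min_on_interval[OF assms(6-8), folded d_def]
  have odd_argmin: "odd (card {i\<in>S. c * int i = int d * min c 0})" for c
    using assms(9) by (simp add: min_on_S(2))
  have k: "k = int d * min a 0"
    using sum_tf_monom_eq_t_exponent[OF assms(1,5) eq] min_on_S(1) odd_argmin by blast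
  have deg: "k + l * int d = int d * max (a + b * int d) 0"
  proof (rule sum_tf_monom_eq_degree[OF \<open>f \<noteq> 0\<close> assms(5) eq, folded d_def])
    let ?D = "a + b * int d"
    have degree_term: "a * int i + b * int i * int d = - ((- ?D) * int i)" for i
      by (simp add: algebra_simps)
    have max_eq: "int d * max ?D 0 = - (int d * min (- ?D) 0)" by (simp add: min_def max_def algebra_simps)
    show "\<forall>i\<in>S. a * int i + b * int i * int d \<le> int d * max ?D 0"
      unfolding degree_term max_eq using min_on_S(1)[of "- ?D"] by auto
    have "{i\<in>S. a * int i + b * int i * int d = int d * max ?D 0}
        = {i\<in>S. (- ?D) * int i = int d * min (- ?D) 0}"
      unfolding degree_term max_eq by simp
    with odd_argmin show "odd (card {i\<in>S. a * int i + b * int i * int d = int d * max ?D 0})"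
      by simp
  qed
  have l: "l = int d * min b 0" if "b \<noteq> 0"
  proof -
    define i0 where "i0 = (if 0 < b then 0 else d)"
    have argmin: "{i\<in>S. b * int i = int d * min b 0} = {i0}"
      using that by (simp add: min_on_S(2) i0_def)
    then have "i0 \<in> S" and i0_min: "b * int i0 = int d * min b 0" by auto
    have "\<forall>i\<in>S - {i0}. b * int i0 < b * int i"
      using min_on_S(1)[of b] argmin i0_min by fastforce
    with sum_tf_monom_eq_f_exponent[OF assms(2,3,5) eq \<open>i0 \<in> S\<close>] i0_min show ?thesis by simp
  qed
  have "b = 0 \<and> l = \<bar>a\<bar>"
    using exponent_constraints_imp_abs[of d b l a] assms(4) l deg by (simp add: k d_def)
  with k show ?thesis by (simp add: d_def)
qed

section \<open>Automorphisms of the unit group\<close>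

lemma multiplicative_on_powi:
  fixes \<Phi> :: "'a::field \<Rightarrow> 'a"
  assumes mult_closed: "\<forall>u\<in>U. \<forall>v\<in>U. u * v \<in> U" and inverse_closed: "\<forall>u\<in>U. inverse u \<in> U"
    and "0 \<notin> U" and hom: "\<forall>u\<in>U. \<forall>v\<in>U. \<Phi> (u * v) = \<Phi> u * \<Phi> v"
    and "\<Phi> ` U \<subseteq> U" and "u \<in> U"
  shows "\<Phi> (u powi n) = \<Phi> u powi n"
proof -
  have nonzero: "v \<noteq> 0" if "v \<in> U" for v using \<open>0 \<notin> U\<close> that by blast
  have "u * inverse u \<in> U" using mult_closed inverse_closed \<open>u \<in> U\<close> by blast
  then have "1 \<in> U" using nonzero[OF \<open>u \<in> U\<close>] by simp
  then have "\<Phi> 1 = \<Phi> 1 * \<Phi> 1" using hom by (metis mult_1)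
  moreover have "\<Phi> 1 \<noteq> 0" using nonzero \<open>1 \<in> U\<close> \<open>\<Phi> ` U \<subseteq> U\<close> by blast
  ultimately have "\<Phi> 1 = 1" by simp
  have power: "u ^ m \<in> U \<and> \<Phi> (u ^ m) = \<Phi> u ^ m" for m
  proof (induction m)
    case (Suc m)
    with mult_closed hom \<open>u \<in> U\<close> show ?case by simp
  qed (simp add: \<open>1 \<in> U\<close> \<open>\<Phi> 1 = 1\<close>)
  have inverse: "\<Phi> (inverse v) = inverse (\<Phi> v)" if "v \<in> U" for v
  proof -
    have "\<Phi> (v * inverse v) = \<Phi> v * \<Phi> (inverse v)" using hom inverse_closed that by blast
    with nonzero[OF that] \<open>\<Phi> 1 = 1\<close> have "\<Phi> v * \<Phi> (inverse v) = 1" by simp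
    then show ?thesis by (rule inverse_unique[symmetric])
  qed
  show ?thesis
  proof (cases "0 \<le> n")
    case True
    then have "n = int (nat n)" by simp
    with power show ?thesis by (metis power_int_of_nat)
  next
    case False
    then have "n = - int (nat (- n))" by simp
    with power inverse show ?thesis by (metis power_int_minus power_int_of_nat)
  qed
qed

lemma unit_group_aut_tf_monom:
  fixes f :: "bit poly"
  assumes "prime_elem f" and "unit_group_aut f \<Phi>"
  shows "\<Phi> (tf_monom f a b) = \<Phi> (tf_monom f 1 0) powi a * \<Phi> (tf_monom f 0 1) powi b"
proof -
  have "f \<noteq> 0" using assms(1) by auto
  let ?U = "units_Rf f"
  note units = units_Rf_iff[OF assms(1)] tf_monom_in_units_Rf[OF \<open>f \<noteq> 0\<close>]
  have hom: "\<forall>u\<in>?U. \<forall>v\<in>?U. \<Phi> (u * v) = \<Phi> u * \<Phi> v" and "\<Phi> ` ?U \<subseteq> ?U"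
    using assms(2) by (auto simp: unit_group_aut_def bij_betw_def)
  have "\<forall>u\<in>?U. \<forall>v\<in>?U. u * v \<in> ?U" and "\<forall>u\<in>?U. inverse u \<in> ?U" and "0 \<notin> ?U"
    using units by (auto simp: tf_monom_mult[OF \<open>f \<noteq> 0\<close>] inverse_tf_monom tf_monom_nonzero[OF \<open>f \<noteq> 0\<close>])
  note powi = multiplicative_on_powi[OF this hom \<open>\<Phi> ` ?U \<subseteq> ?U\<close>]
  have "\<Phi> (tf_monom f a b) = \<Phi> (tf_monom f 1 0 powi a * tf_monom f 0 1 powi b)"
    by (simp add: tf_monom_powi tf_monom_mult[OF \<open>f \<noteq> 0\<close>])
  also have "\<dots> = \<Phi> (tf_monom f 1 0 powi a) * \<Phi> (tf_monom f 0 1 powi b)"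
    by (rule hom[rule_format]) (simp_all add: tf_monom_powi units(2))
  also have "\<dots> = \<Phi> (tf_monom f 1 0) powi a * \<Phi> (tf_monom f 0 1) powi b"
    by (simp add: powi units(2))
  finally show ?thesis .
qed

lemma self_reciprocal_if_sum_inverse_powers:
  fixes f :: "bit poly"
  assumes "f \<noteq> 0"
    and "(\<Sum>i | coeff f i \<noteq> 0. tf_monom f (- int i) 0) = tf_monom f (- int (degree f)) 1"
  shows "self_reciprocal f"
proof -
  have "to_fract (reflect_poly f) = (\<Sum>i | coeff f i \<noteq> 0. to_fract (monom 1 (degree f - i)))"
    by (subst reflect_bit_poly_eq_sum_monom) simp
  also have "\<dots> = (\<Sum>i | coeff f i \<noteq> 0. tf_monom f (int (degree f)) 0 * tf_monom f (- int i) 0)"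
  proof (rule sum.cong)
    fix i assume "i \<in> {i. coeff f i \<noteq> 0}"
    then have "i \<le> degree f" by (simp add: le_degree)
    then show "to_fract (monom 1 (degree f - i)) = tf_monom f (int (degree f)) 0 * tf_monom f (- int i) 0"
      using tf_monom_of_nat[of f "degree f - i" 0] by (simp add: tf_monom_mult[OF assms(1)] of_nat_diff)
  qed simp
  also have "\<dots> = tf_monom f (int (degree f)) 0 * tf_monom f (- int (degree f)) 1"
    by (simp only: sum_distrib_left[symmetric] assms(2))
  also have "\<dots> = to_fract f" by (simp add: tf_monom_mult[OF assms(1)] tf_monom_0_1)
  finally show ?thesis by (simp add: self_reciprocal_def)
qed

(* On exponent vectors \<Phi> acts by the integer matrix [[a, k], [0, |a|]], which is
   invertible only if a |a| = \<plusminus>1. *)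
lemma unit_group_aut_triangular_exponents:
  fixes f :: "bit poly"
  assumes "coeff f 0 = 1" and "prime_elem f" and "\<not> f dvd [:0, 1:]" and "unit_group_aut f \<Phi>"
    and "\<Phi> (to_fract [:0, 1:]) = tf_monom f a 0" and "\<Phi> (to_fract f) = tf_monom f k \<bar>a\<bar>"
  shows "a = 1 \<or> a = -1"
proof -
  have "f \<noteq> 0" using assms(1) by auto
  note inject = tf_monom_inject[OF assms(1-3)]
  have inj: "inj_on \<Phi> (units_Rf f)" and surj: "\<Phi> ` units_Rf f = units_Rf f"
    using assms(4) by (auto simp: unit_group_aut_def bij_betw_def)
  have image: "\<Phi> (tf_monom f x y) = tf_monom f (x * a + y * k) (y * \<bar>a\<bar>)" for x y
    using unit_group_aut_tf_monom[OF assms(2,4)] assms(5,6)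
    by (simp add: tf_monom_1_0 tf_monom_0_1 tf_monom_powi tf_monom_mult[OF \<open>f \<noteq> 0\<close>] mult.commute)
  have "a \<noteq> 0"
  proof
    assume "a = 0"
    then have "\<Phi> (tf_monom f 1 0) = \<Phi> (tf_monom f 0 0)" by (simp only: image) simp
    then have "tf_monom f 1 0 = tf_monom f 0 0"
      using inj tf_monom_in_units_Rf[OF \<open>f \<noteq> 0\<close>] by (blast dest: inj_onD)
    then show False by (simp only: inject) simp
  qed
  obtain u where "u \<in> units_Rf f" and "\<Phi> u = tf_monom f 1 0"
    using surj tf_monom_in_units_Rf[OF \<open>f \<noteq> 0\<close>] by (metis imageE)
  moreover obtain x y where "u = tf_monom f x y" using \<open>u \<in> units_Rf f\<close> units_Rf_iff[OF assms(2)] by blast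
  ultimately have "x * a + y * k = 1" and "y * \<bar>a\<bar> = 0" using image inject by simp_all
  with \<open>a \<noteq> 0\<close> have "x * a = 1" by simp
  then show ?thesis using zmult_eq_1_iff by blast
qed

lemma unit_group_aut_fixing_generators:
  fixes f :: "bit poly"
  assumes "prime_elem f" and "unit_group_aut f \<Phi>"
    and "\<Phi> (to_fract [:0, 1:]) = to_fract [:0, 1:]" and "\<Phi> (to_fract f) = to_fract f"
  shows "\<forall>u\<in>units_Rf f. \<Phi> u = u"
proof
  have "f \<noteq> 0" using assms(1) by auto
  fix u assume "u \<in> units_Rf f"
  then obtain x y where u: "u = tf_monom f x y" using units_Rf_iff[OF assms(1)] by blast
  with unit_group_aut_tf_monom[OF assms(1,2), of x y]
  have "\<Phi> u = \<Phi> (tf_monom f 1 0) powi x * \<Phi> (tf_monom f 0 1) powi y" by (simp only:)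
  also have "\<dots> = u"
    using assms(3,4) by (simp add: u tf_monom_1_0 tf_monom_0_1 tf_monom_def)
  finally show "\<Phi> u = u" .
qed

lemma unit_group_aut_eq_id:
  fixes f :: "bit poly"
  assumes "irreducible f" and "f \<noteq> [:0, 1:]" and "\<not> self_reciprocal f" and "unit_group_aut f \<Phi>"
    and f_image: "\<Phi> (to_fract f) = (\<Sum>i | coeff f i \<noteq> 0. \<Phi> (to_fract [:0, 1:]) ^ i)"
  shows "\<forall>u\<in>units_Rf f. \<Phi> u = u"
proof -
  define S where "S = {i. coeff f i \<noteq> 0}"
  have c0: "coeff f 0 = 1" using coeff_0_irreducible_bit_poly[OF assms(1,2)] .
  have "f \<noteq> 0" and "prime_elem f" using assms(1) by (auto simp: field_poly_irreducible_imp_prime)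
  have "\<not> f dvd [:0, 1:]" using irreducible_bit_poly_not_dvd_t[OF assms(1,2)] .
  have "0 < degree f" using assms(1) is_unit_iff_degree[OF \<open>f \<noteq> 0\<close>] by (auto simp: irreducible_def)
  note S = support_irreducible_bit_poly[OF assms(1-3), folded S_def]
  have "\<Phi> (to_fract [:0, 1:]) \<in> units_Rf f" and "\<Phi> (to_fract f) \<in> units_Rf f"
    using assms(4) tf_monom_in_units_Rf[OF \<open>f \<noteq> 0\<close>, of 1 0] tf_monom_in_units_Rf[OF \<open>f \<noteq> 0\<close>, of 0 1]
    by (auto simp: unit_group_aut_def bij_betw_def tf_monom_1_0 tf_monom_0_1)
  then obtain a b k l where t_image: "\<Phi> (to_fract [:0, 1:]) = tf_monom f a b"
    and f_image': "\<Phi> (to_fract f) = tf_monom f k l"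
    using units_Rf_iff[OF \<open>prime_elem f\<close>] by meson
  with f_image have rel: "(\<Sum>i\<in>S. tf_monom f a b ^ i) = tf_monom f k l" by (simp add: S_def)
  then have "b = 0" and k: "k = int (degree f) * min a 0" and "l = \<bar>a\<bar>"
    using sum_power_tf_monom_eq_tf_monom[OF c0 \<open>prime_elem f\<close> \<open>\<not> f dvd [:0, 1:]\<close> \<open>0 < degree f\<close> S]
    by auto
  with t_image f_image' have "\<Phi> (to_fract [:0, 1:]) = tf_monom f a 0" and "\<Phi> (to_fract f) = tf_monom f k \<bar>a\<bar>"
    by simp_all
  from unit_group_aut_triangular_exponents[OF c0 \<open>prime_elem f\<close> \<open>\<not> f dvd [:0, 1:]\<close> assms(4) this]
  consider "a = 1" | "a = -1" by blast
  then show ?thesis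
  proof cases
    case 1
    with t_image f_image' \<open>b = 0\<close> k \<open>l = \<bar>a\<bar>\<close>
    have "\<Phi> (to_fract [:0, 1:]) = to_fract [:0, 1:]" and "\<Phi> (to_fract f) = to_fract f"
      by (simp_all add: tf_monom_1_0 tf_monom_0_1)
    with \<open>prime_elem f\<close> assms(4) show ?thesis by (rule unit_group_aut_fixing_generators)
  next
    case 2
    with rel \<open>b = 0\<close> k \<open>l = \<bar>a\<bar>\<close>
    have "(\<Sum>i | coeff f i \<noteq> 0. tf_monom f (- int i) 0) = tf_monom f (- int (degree f)) 1"
      by (simp add: tf_monom_power S_def)
    with \<open>f \<noteq> 0\<close> have "self_reciprocal f" by (rule self_reciprocal_if_sum_inverse_powers)
    with assms(3) show ?thesis ..
  qed
qed

lemma additive_aut_0: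
  assumes "additive_aut f \<phi>"
  shows "\<phi> 0 = 0"
proof -
  have "0 \<in> Rf f" using to_fract_in_Rf[of 0 f] by simp
  with assms have "\<phi> (0 + 0) = \<phi> 0 + \<phi> 0" unfolding additive_aut_def by blast
  then show ?thesis by (metis add.right_neutral add_left_cancel)
qed

lemma additive_aut_to_fract_sum:
  assumes "additive_aut f \<phi>"
  shows "\<phi> (\<Sum>i\<in>I. to_fract (p i)) = (\<Sum>i\<in>I. \<phi> (to_fract (p i)))"
proof (induction I rule: infinite_finite_induct)
  case (insert i I)
  have "(\<Sum>i\<in>I. to_fract (p i)) \<in> Rf f" using to_fract_in_Rf[of "\<Sum>i\<in>I. p i" f] by simp
  then have "\<phi> (to_fract (p i) + (\<Sum>i\<in>I. to_fract (p i)))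
      = \<phi> (to_fract (p i)) + \<phi> (\<Sum>i\<in>I. to_fract (p i))"
    using assms to_fract_in_Rf by (simp add: additive_aut_def)
  with insert show ?case by simp
qed (simp_all add: additive_aut_0[OF assms])

lemma inverse_in_units_Rf:
  assumes "u \<in> units_Rf f"
  shows "inverse u \<in> units_Rf f"
proof -
  obtain v where "u \<in> Rf f" and "v \<in> Rf f" and "u * v = 1" using assms by (auto simp: units_Rf_def)
  moreover from \<open>u * v = 1\<close> have "inverse u = v" by (rule inverse_unique)
  ultimately show ?thesis by (auto simp: units_Rf_def mult.commute)
qed

lemma unit_group_aut_inverse:
  assumes "unit_group_aut f \<Phi>"
  shows "unit_group_aut f (\<lambda>u. \<Phi> (inverse u))"
proof -
  have "bij_betw inverse (units_Rf f) (units_Rf f)"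
    by (rule bij_betw_byWitness[of _ inverse]) (auto simp: inverse_in_units_Rf)
  with assms show ?thesis
    unfolding unit_group_aut_def
    by (auto simp: bij_betw_trans[of inverse _ _ \<Phi>, unfolded comp_def] inverse_in_units_Rf
        inverse_mult_distrib)
qed

lemma compatible_unit_group_aut_f_image:
  fixes f :: "bit poly"
  assumes "prime_elem f" and "additive_aut f \<phi>" and "unit_group_aut f \<Phi>"
    and compat: "\<forall>u\<in>units_Rf f. \<Phi> u * \<phi> 1 = \<phi> u"
  shows "\<Phi> (to_fract f) = (\<Sum>i | coeff f i \<noteq> 0. \<Phi> (to_fract [:0, 1:]) ^ i)"
proof -
  have "f \<noteq> 0" using assms(1) by auto
  note units = tf_monom_in_units_Rf[OF \<open>f \<noteq> 0\<close>]
  have "\<phi> 1 \<noteq> \<phi> 0"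
    using assms(2) to_fract_in_Rf[of 1 f] to_fract_in_Rf[of 0 f]
    by (auto simp: additive_aut_def bij_betw_def dest: inj_onD)
  then have "\<phi> 1 \<noteq> 0" using additive_aut_0[OF assms(2)] by simp
  have t_power: "\<phi> (to_fract (monom 1 i)) = \<Phi> (to_fract [:0, 1:]) ^ i * \<phi> 1" for i
  proof -
    have "\<phi> (tf_monom f (int i) 0) = \<Phi> (tf_monom f (int i) 0) * \<phi> 1" using compat units by simp
    also have "\<dots> = \<Phi> (to_fract [:0, 1:]) ^ i * \<phi> 1"
      by (simp add: unit_group_aut_tf_monom[OF assms(1,3), of "int i" 0] tf_monom_1_0)
    finally show ?thesis using tf_monom_of_nat[of f i 0] by simp
  qed
  define S where "S = {i. coeff f i \<noteq> 0}"
  have "\<Phi> (to_fract f) * \<phi> 1 = \<phi> (to_fract f)"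
    using compat units[of 0 1] by (simp add: tf_monom_0_1)
  also have "\<dots> = \<phi> (to_fract (\<Sum>i\<in>S. monom 1 i))"
    using bit_poly_eq_sum_monom[of f] unfolding S_def by (rule arg_cong)
  also have "\<dots> = (\<Sum>i\<in>S. \<Phi> (to_fract [:0, 1:]) ^ i) * \<phi> 1"
    by (simp add: additive_aut_to_fract_sum[OF assms(2)] t_power sum_distrib_right)
  finally show ?thesis using \<open>\<phi> 1 \<noteq> 0\<close> by (simp add: S_def)
qed

lemma compatible_unit_group_aut_eq_id:
  fixes f :: "bit poly"
  assumes "irreducible f" and "f \<noteq> [:0, 1:]" and "\<not> self_reciprocal f"
    and "additive_aut f \<phi>" and "unit_group_aut f \<Phi>"
    and "\<forall>u\<in>units_Rf f. \<Phi> u * \<phi> 1 = \<phi> u"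
  shows "\<forall>u\<in>units_Rf f. \<Phi> u = u"
  using assms(1) compatible_unit_group_aut_f_image[OF _ assms(4-6)]
  by (intro unit_group_aut_eq_id[OF assms(1-3,5)]) (simp add: field_poly_irreducible_imp_prime)

theorem mainTheorem15:
  fixes f :: "bit poly"
    and \<phi> \<Phi> :: "bit poly fract \<Rightarrow> bit poly fract"
  assumes "irreducible f" and "f \<noteq> [:0, 1:]" and "\<not> self_reciprocal f"
    and "additive_aut f \<phi>" and "unit_group_aut f \<Phi>"
  shows "((\<forall>u \<in> units_Rf f. \<Phi> u * \<phi> 1 = \<phi> u) \<longrightarrow> (\<forall>u \<in> units_Rf f. \<Phi> u = u))
       \<and> ((\<forall>u \<in> units_Rf f. \<Phi> u * \<phi> 1 = \<phi> (inverse u)) \<longrightarrow> (\<forall>u \<in> units_Rf f. \<Phi> u = inverse u))"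
proof (intro conjI impI)
  assume "\<forall>u\<in>units_Rf f. \<Phi> u * \<phi> 1 = \<phi> u"
  then show "\<forall>u\<in>units_Rf f. \<Phi> u = u"
    by (rule compatible_unit_group_aut_eq_id[OF assms])
next
  assume compat: "\<forall>u\<in>units_Rf f. \<Phi> u * \<phi> 1 = \<phi> (inverse u)"
  have "\<forall>u\<in>units_Rf f. \<Phi> (inverse u) * \<phi> 1 = \<phi> u"
    using compat inverse_in_units_Rf by fastforce
  with compatible_unit_group_aut_eq_id[OF assms(1-4) unit_group_aut_inverse[OF assms(5)]]
  have "\<forall>u\<in>units_Rf f. \<Phi> (inverse u) = u" by blast
  then show "\<forall>u\<in>units_Rf f. \<Phi> u = inverse u"
    using inverse_in_units_Rf by fastforce
qed

end
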